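(* Let $M$ be a multigraph with $n$ vertices. Then $M$ is the double competition multigraph of an acyclic digraph if and only if there exist an ordering $(v_1,\ldots,v_n)$ of the vertices of $M$ and a double indexed edge clique partition $\{S_{ij}\mid i,j\in[n]\}$ of $M$ such that the following conditions hold: (I) for any $i,j\in[n]$, if $|A_i\cap B_j|\ge 2$, then $A_i\cap B_j=S_{ij}$; (IV) for any $i,j,k\in[n]$, $v_k\in S_{ij}$ implies $i<k<j$, where $A_i = S_{i*}\cup T^+_i$, $S_{i*} := \bigcup_{p\in[n]} S_{ip}$, $T^+_i := \{v_b \mid a,b\in[n],\ v_i\in S_{ab}\}$, and $B_j = S_{*j}\cup T^-_j$, $S_{*j} := \bigcup_{q\in[n]} S_{qj}$, $T^-_j := \{v_a \mid a,b\in[n],\ v_j\in S_{ab}\}$.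
   Context: A digraph $D$ is a pair $(V(D),A(D))$ with $A(D)$ a set of ordered pairs of vertices (arcs); $D$ is acyclic if it has no directed cycles (in particular no loops). $N^+_D(x)=\{v\mid (x,v)\in A(D)\}$ and $N^-_D(x)=\{v\mid (v,x)\in A(D)\}$. A multigraph $M$ (without loops) is a vertex set $V(M)$ together with a function $m_M$ assigning to each unordered pair $\{x,y\}$ of distinct vertices a nonnegative integer, the number of edges between $x$ and $y$. The double competition multigraph of a digraph $D$ is the multigraph $M$ with $V(M)=V(D)$ and $m_M(\{x,y\}) = |N^+_D(x)\cap N^+_D(y)|\cdot|N^-_D(x)\cap N^-_D(y)|$ for distinct $x,y$. A clique of $M$ is a set of vertices that are pairwise adjacent (i.e. $m_M\ge 1$ on every pair of distinct elements); the empty set and singletons count as cliques. An edge clique partition of $M$ is a family (multiset) $\mathcal{F}$ of cliques of $M$ such that any two distinct vertices $x,y$ are contained in exactly $m_M(\{x,y\})$ members of $\mathcal{F}$; a double indexed edge clique partition $\{S_{ij}\mid i,j\in[n]\}$ is such a family indexed by pairs $(i,j)\in[n]\times[n]$ (members may be empty). $[n]=\{1,\ldots,n\}$. *)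

theory Defs
  imports Main
begin

text \<open>A multigraph on vertex set V is given by a multiplicity function m on
unordered pairs, m {x,y} for distinct x, y in V. A digraph on V is an arc set
Arcs with Arcs a subset of V x V.\<close>

definition out_nbrs :: "('a \<times> 'a) set \<Rightarrow> 'a \<Rightarrow> 'a set" where
  "out_nbrs Arcs x = {v. (x, v) \<in> Arcs}"

definition in_nbrs :: "('a \<times> 'a) set \<Rightarrow> 'a \<Rightarrow> 'a set" where
  "in_nbrs Arcs x = {v. (v, x) \<in> Arcs}"

definition is_double_competition_multigraph ::
  "'a set \<Rightarrow> ('a set \<Rightarrow> nat) \<Rightarrow> ('a \<times> 'a) set \<Rightarrow> bool" where
  "is_double_competition_multigraph V m Arcs \<longleftrightarrow>
     (\<forall>x\<in>V. \<forall>y\<in>V. x \<noteq> y \<longrightarrow>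
        m {x, y} = card (out_nbrs Arcs x \<inter> out_nbrs Arcs y) *
                   card (in_nbrs Arcs x \<inter> in_nbrs Arcs y))"

definition is_clique :: "'a set \<Rightarrow> ('a set \<Rightarrow> nat) \<Rightarrow> 'a set \<Rightarrow> bool" where
  "is_clique V m K \<longleftrightarrow> K \<subseteq> V \<and> (\<forall>x\<in>K. \<forall>y\<in>K. x \<noteq> y \<longrightarrow> m {x, y} \<ge> 1)"

definition is_double_indexed_ecp ::
  "'a set \<Rightarrow> ('a set \<Rightarrow> nat) \<Rightarrow> nat \<Rightarrow> (nat \<Rightarrow> nat \<Rightarrow> 'a set) \<Rightarrow> bool" where
  "is_double_indexed_ecp V m n S \<longleftrightarrow>
     (\<forall>i\<in>{1..n}. \<forall>j\<in>{1..n}. is_clique V m (S i j)) \<and>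
     (\<forall>x\<in>V. \<forall>y\<in>V. x \<noteq> y \<longrightarrow>
        m {x, y} = card {(i, j). i \<in> {1..n} \<and> j \<in> {1..n} \<and> x \<in> S i j \<and> y \<in> S i j})"

definition S_row :: "nat \<Rightarrow> (nat \<Rightarrow> nat \<Rightarrow> 'a set) \<Rightarrow> nat \<Rightarrow> 'a set" where
  "S_row n S i = (\<Union>p\<in>{1..n}. S i p)"

definition S_col :: "nat \<Rightarrow> (nat \<Rightarrow> nat \<Rightarrow> 'a set) \<Rightarrow> nat \<Rightarrow> 'a set" where
  "S_col n S j = (\<Union>q\<in>{1..n}. S q j)"

definition T_plus :: "nat \<Rightarrow> (nat \<Rightarrow> 'a) \<Rightarrow> (nat \<Rightarrow> nat \<Rightarrow> 'a set) \<Rightarrow> nat \<Rightarrow> 'a set" where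
  "T_plus n v S i = {v b | a b. a \<in> {1..n} \<and> b \<in> {1..n} \<and> v i \<in> S a b}"

definition T_minus :: "nat \<Rightarrow> (nat \<Rightarrow> 'a) \<Rightarrow> (nat \<Rightarrow> nat \<Rightarrow> 'a set) \<Rightarrow> nat \<Rightarrow> 'a set" where
  "T_minus n v S j = {v a | a b. a \<in> {1..n} \<and> b \<in> {1..n} \<and> v j \<in> S a b}"

definition A_set :: "nat \<Rightarrow> (nat \<Rightarrow> 'a) \<Rightarrow> (nat \<Rightarrow> nat \<Rightarrow> 'a set) \<Rightarrow> nat \<Rightarrow> 'a set" where
  "A_set n v S i = S_row n S i \<union> T_plus n v S i"

definition B_set :: "nat \<Rightarrow> (nat \<Rightarrow> 'a) \<Rightarrow> (nat \<Rightarrow> nat \<Rightarrow> 'a set) \<Rightarrow> nat \<Rightarrow> 'a set" where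
  "B_set n v S j = S_col n S j \<union> T_minus n v S j"

end

theory Submission
  imports Defs
begin

text \<open>Both directions rest on one count: for a digraph on vertices numbered by \<open>v\<close>,
\<open>|N\<^sup>+(x) \<inter> N\<^sup>+(y)| \<cdot> |N\<^sup>-(x) \<inter> N\<^sup>-(y)|\<close> is the number of index pairs \<open>(i, j)\<close> with
both \<open>x\<close> and \<open>y\<close> in \<open>N\<^sup>+(v\<^sub>i) \<inter> N\<^sup>-(v\<^sub>j)\<close>. Given an acyclic digraph, number its
vertices topologically and take \<open>S\<^sub>i\<^sub>j = N\<^sup>+(v\<^sub>i) \<inter> N\<^sup>-(v\<^sub>j)\<close>; then \<open>A\<^sub>i = N\<^sup>+(v\<^sub>i)\<close>
and \<open>B\<^sub>j = N\<^sup>-(v\<^sub>j)\<close>, so (I) and (IV) hold. Conversely, given the partition, draw arcs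
\<open>v\<^sub>i \<rightarrow> x\<close> for \<open>x \<in> S\<^sub>i\<^sub>*\<close> and \<open>x \<rightarrow> v\<^sub>j\<close> for \<open>x \<in> S\<^sub>*\<^sub>j\<close>: then \<open>N\<^sup>+(v\<^sub>i) = A\<^sub>i\<close> and
\<open>N\<^sup>-(v\<^sub>j) = B\<^sub>j\<close>, (IV) says every arc increases the index, and (I) says that two distinct
vertices lie in \<open>A\<^sub>i \<inter> B\<^sub>j\<close> exactly when they lie in \<open>S\<^sub>i\<^sub>j\<close>.\<close>

lemma finite_acyclic_sink:
  assumes "finite R" "acyclic R" "V \<noteq> {}"
  obtains s where "s \<in> V" "\<And>y. y \<in> V \<Longrightarrow> (s, y) \<notin> R"
proof (rule wfE_min'[OF finite_acyclic_wf_converse[OF assms(1,2)] assms(3)])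
  fix z assume "z \<in> V" "\<And>y. (y, z) \<in> R\<inverse> \<Longrightarrow> y \<notin> V"
  then show thesis using that by blast
qed

lemma acyclic_topological_numbering:
  assumes "finite V" "R \<subseteq> V \<times> V" "acyclic R"
  shows "\<exists>v. bij_betw v {1..card V} V \<and>
    (\<forall>i\<in>{1..card V}. \<forall>k\<in>{1..card V}. (v i, v k) \<in> R \<longrightarrow> i < k)"
  using assms
proof (induction V arbitrary: R rule: finite_remove_induct)
  case empty
  then show ?case by (simp add: bij_betw_def)
next
  case (remove V)
  have "finite R"
    using remove.prems(1) \<open>finite V\<close> by (meson finite_SigmaI finite_subset)
  then obtain s where s: "s \<in> V" and sink: "\<And>y. y \<in> V \<Longrightarrow> (s, y) \<notin> R"
    using finite_acyclic_sink remove.prems(2) \<open>V \<noteq> {}\<close> by blast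
  define n where "n = card (V - {s})"
  have card_V: "card V = Suc n"
    using \<open>finite V\<close> s unfolding n_def by (rule card_Suc_Diff1[symmetric])
  have "Restr R (V - {s}) \<subseteq> (V - {s}) \<times> (V - {s})" "acyclic (Restr R (V - {s}))"
    using acyclic_subset[OF remove.prems(2)] by auto
  from remove.IH[OF s this] obtain v where v: "bij_betw v {1..n} (V - {s})"
    and v_ord: "\<forall>i\<in>{1..n}. \<forall>k\<in>{1..n}. (v i, v k) \<in> Restr R (V - {s}) \<longrightarrow> i < k"
    unfolding n_def by blast
  define w where "w = v(Suc n := s)"
  have "bij_betw w {1..n} (V - {s})"
    using v by (rule bij_betw_cong[THEN iffD1, rotated]) (simp add: w_def)
  then have "bij_betw w ({1..n} \<union> {Suc n}) ((V - {s}) \<union> {w (Suc n)})"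
    by (intro notIn_Un_bij_betw) (auto simp: w_def)
  moreover have "{1..n} \<union> {Suc n} = {1..Suc n}" "(V - {s}) \<union> {w (Suc n)} = V"
    using s by (auto simp: w_def)
  ultimately have w: "bij_betw w {1..card V} V"
    by (simp add: card_V)
  have w_ord: "i < k" if "i \<in> {1..card V}" "k \<in> {1..card V}" "(w i, w k) \<in> R" for i k
  proof -
    have "w k \<in> V" using w that(2) by (meson bij_betwE)
    then have "i \<noteq> Suc n" using sink that(3) by (auto simp: w_def)
    show "i < k"
    proof (cases "k = Suc n")
      case True
      then show ?thesis using \<open>i \<noteq> Suc n\<close> that(1) card_V by simp
    next
      case False
      then have "i \<in> {1..n}" "k \<in> {1..n}" using \<open>i \<noteq> Suc n\<close> that(1,2) card_V by auto
      moreover from this have "v i \<in> V - {s}" "v k \<in> V - {s}" using v by (meson bij_betwE)+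
      ultimately show ?thesis
        using v_ord that(3) \<open>i \<noteq> Suc n\<close> False by (simp add: w_def)
    qed
  qed
  show ?case
    using w w_ord by blast
qed

lemma acyclicI_increasing_numbering:
  fixes v :: "'i::preorder \<Rightarrow> 'a"
  assumes "inj_on v I" "R \<subseteq> v ` I \<times> v ` I"
    and "\<And>i k. i \<in> I \<Longrightarrow> k \<in> I \<Longrightarrow> (v i, v k) \<in> R \<Longrightarrow> i < k"
  shows "acyclic R"
proof -
  have "acyclic (R\<inverse>)"
  proof (rule acyclicI_order[where f = "inv_into I v"])
    fix a b assume "(a, b) \<in> R\<inverse>"
    then obtain i k where "i \<in> I" "k \<in> I" "b = v i" "a = v k" "(v i, v k) \<in> R"
      using assms(2) by blast
    then show "inv_into I v b < inv_into I v a"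
      using assms(1,3) by simp
  qed
  then show ?thesis by simp
qed

definition between :: "('a \<times> 'a) set \<Rightarrow> 'a \<Rightarrow> 'a \<Rightarrow> 'a set" where
  "between R a b = out_nbrs R a \<inter> in_nbrs R b"

lemma is_double_indexed_ecp_subset:
  "is_double_indexed_ecp V m n S \<Longrightarrow> i \<in> {1..n} \<Longrightarrow> j \<in> {1..n} \<Longrightarrow> S i j \<subseteq> V"
  by (auto simp: is_double_indexed_ecp_def is_clique_def)

lemma card_bij_betw_preimage:
  assumes "bij_betw v I V" "P \<subseteq> V"
  shows "card {i \<in> I. v i \<in> P} = card P"
proof -
  have "bij_betw v {i \<in> I. v i \<in> P} P"
    using assms by (intro bij_betw_subset[OF assms(1)]) (auto simp: bij_betw_def)
  then show ?thesis by (rule bij_betw_same_card)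
qed

lemma card_common_nbrs_product:
  assumes "bij_betw v I V" "R \<subseteq> V \<times> V"
  shows "card (out_nbrs R x \<inter> out_nbrs R y) * card (in_nbrs R x \<inter> in_nbrs R y) =
    card {(i, j). i \<in> I \<and> j \<in> I \<and> x \<in> between R (v i) (v j) \<and> y \<in> between R (v i) (v j)}"
proof -
  have "{(i, j). i \<in> I \<and> j \<in> I \<and> x \<in> between R (v i) (v j) \<and> y \<in> between R (v i) (v j)} =
      {i \<in> I. v i \<in> in_nbrs R x \<inter> in_nbrs R y} \<times> {j \<in> I. v j \<in> out_nbrs R x \<inter> out_nbrs R y}"
    by (auto simp: between_def in_nbrs_def out_nbrs_def)
  moreover have "in_nbrs R x \<inter> in_nbrs R y \<subseteq> V" "out_nbrs R x \<inter> out_nbrs R y \<subseteq> V"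
    using assms(2) by (auto simp: in_nbrs_def out_nbrs_def)
  ultimately show ?thesis
    by (simp only: card_cartesian_product card_bij_betw_preimage[OF assms(1)] mult.commute)
qed

lemma is_double_indexed_ecpI:
  assumes subset: "\<And>i j. i \<in> {1..n} \<Longrightarrow> j \<in> {1..n} \<Longrightarrow> S i j \<subseteq> V"
    and count: "\<And>x y. x \<in> V \<Longrightarrow> y \<in> V \<Longrightarrow> x \<noteq> y \<Longrightarrow>
      m {x, y} = card {(i, j). i \<in> {1..n} \<and> j \<in> {1..n} \<and> x \<in> S i j \<and> y \<in> S i j}"
  shows "is_double_indexed_ecp V m n S"
proof -
  have "is_clique V m (S i j)" if ij: "i \<in> {1..n}" "j \<in> {1..n}" for i j
    unfolding is_clique_def
  proof (intro conjI ballI impI)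
    show "S i j \<subseteq> V" using subset ij .
    fix x y assume xy: "x \<in> S i j" "y \<in> S i j" "x \<noteq> y"
    let ?P = "{(i, j). i \<in> {1..n} \<and> j \<in> {1..n} \<and> x \<in> S i j \<and> y \<in> S i j}"
    have "finite ?P"
      by (rule finite_subset[of _ "{1..n} \<times> {1..n}"]) auto
    moreover have "(i, j) \<in> ?P" using ij xy by simp
    ultimately have "card ?P > 0"
      using card_gt_0_iff by blast
    moreover have "x \<in> V" "y \<in> V" using xy(1,2) subset[OF ij] by auto
    ultimately show "m {x, y} \<ge> 1"
      using count[OF _ _ xy(3)] by simp
  qed
  with count show ?thesis
    unfolding is_double_indexed_ecp_def by blast
qed

lemma double_competition_ecp:
  assumes "bij_betw v {1..n} V" "R \<subseteq> V \<times> V" "is_double_competition_multigraph V m R"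
  shows "is_double_indexed_ecp V m n (\<lambda>i j. between R (v i) (v j))"
proof (rule is_double_indexed_ecpI)
  show "between R (v i) (v j) \<subseteq> V" for i j
    using assms(2) by (auto simp: between_def out_nbrs_def)
  show "m {x, y} = card {(i, j). i \<in> {1..n} \<and> j \<in> {1..n} \<and>
      x \<in> between R (v i) (v j) \<and> y \<in> between R (v i) (v j)}"
    if "x \<in> V" "y \<in> V" "x \<noteq> y" for x y
    using assms(3) that card_common_nbrs_product[OF assms(1,2)]
    by (simp add: is_double_competition_multigraph_def)
qed

lemma S_subset_A_Int_B:
  "i \<in> {1..n} \<Longrightarrow> j \<in> {1..n} \<Longrightarrow> S i j \<subseteq> A_set n v S i \<inter> B_set n v S j"
  by (auto simp: A_set_def B_set_def S_row_def S_col_def)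

lemma A_Int_B_between:
  assumes "i \<in> {1..n}" "j \<in> {1..n}"
  shows "A_set n v (\<lambda>i j. between R (v i) (v j)) i \<inter> B_set n v (\<lambda>i j. between R (v i) (v j)) j
    = between R (v i) (v j)"
proof
  have "A_set n v (\<lambda>i j. between R (v i) (v j)) i \<subseteq> out_nbrs R (v i)"
    by (auto simp: A_set_def S_row_def T_plus_def between_def in_nbrs_def out_nbrs_def)
  moreover have "B_set n v (\<lambda>i j. between R (v i) (v j)) j \<subseteq> in_nbrs R (v j)"
    by (auto simp: B_set_def S_col_def T_minus_def between_def in_nbrs_def out_nbrs_def)
  ultimately show "A_set n v (\<lambda>i j. between R (v i) (v j)) i \<inter>
      B_set n v (\<lambda>i j. between R (v i) (v j)) j \<subseteq> between R (v i) (v j)"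
    by (auto simp: between_def)
  show "between R (v i) (v j) \<subseteq> A_set n v (\<lambda>i j. between R (v i) (v j)) i \<inter>
      B_set n v (\<lambda>i j. between R (v i) (v j)) j"
    using S_subset_A_Int_B[OF assms] .
qed

definition ecp_digraph :: "nat \<Rightarrow> (nat \<Rightarrow> 'a) \<Rightarrow> (nat \<Rightarrow> nat \<Rightarrow> 'a set) \<Rightarrow> ('a \<times> 'a) set" where
  "ecp_digraph n v S =
     {(v i, x) | i x. i \<in> {1..n} \<and> x \<in> S_row n S i} \<union> {(x, v j) | j x. j \<in> {1..n} \<and> x \<in> S_col n S j}"

lemma ecp_digraph_subset:
  assumes "v ` {1..n} \<subseteq> V" "\<And>i j. i \<in> {1..n} \<Longrightarrow> j \<in> {1..n} \<Longrightarrow> S i j \<subseteq> V"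
  shows "ecp_digraph n v S \<subseteq> V \<times> V"
  using assms by (fastforce simp: ecp_digraph_def S_row_def S_col_def)

lemma out_nbrs_ecp_digraph:
  assumes "inj_on v {1..n}" "i \<in> {1..n}"
  shows "out_nbrs (ecp_digraph n v S) (v i) = A_set n v S i"
  using assms by (auto simp: ecp_digraph_def out_nbrs_def A_set_def S_row_def S_col_def T_plus_def
      dest: inj_onD)

lemma in_nbrs_ecp_digraph:
  assumes "inj_on v {1..n}" "j \<in> {1..n}"
  shows "in_nbrs (ecp_digraph n v S) (v j) = B_set n v S j"
  using assms by (auto simp: ecp_digraph_def in_nbrs_def B_set_def S_row_def S_col_def T_minus_def
      dest: inj_onD)

lemma acyclic_ecp_digraph:
  assumes inj: "inj_on v {1..n}"
    and subset: "\<And>i j. i \<in> {1..n} \<Longrightarrow> j \<in> {1..n} \<Longrightarrow> S i j \<subseteq> v ` {1..n}"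
    and order: "\<And>i j k. i \<in> {1..n} \<Longrightarrow> j \<in> {1..n} \<Longrightarrow> k \<in> {1..n} \<Longrightarrow> v k \<in> S i j \<Longrightarrow> i < k \<and> k < j"
  shows "acyclic (ecp_digraph n v S)"
proof (rule acyclicI_increasing_numbering[OF inj])
  show "ecp_digraph n v S \<subseteq> v ` {1..n} \<times> v ` {1..n}"
    using subset by (intro ecp_digraph_subset) auto
  fix i k assume ik: "i \<in> {1..n}" "k \<in> {1..n}" "(v i, v k) \<in> ecp_digraph n v S"
  then have "v k \<in> out_nbrs (ecp_digraph n v S) (v i)"
    by (simp add: out_nbrs_def)
  then have "v k \<in> S_row n S i \<union> T_plus n v S i"
    by (simp add: out_nbrs_ecp_digraph[OF inj ik(1)] A_set_def)
  then show "i < k"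
    using ik(1,2) order by (auto simp: S_row_def T_plus_def dest: inj_onD[OF inj])
qed

lemma distinct_pair_mem_iff:
  assumes "finite X" "S \<subseteq> X" "card X \<ge> 2 \<Longrightarrow> X = S" "x \<noteq> y"
  shows "x \<in> X \<and> y \<in> X \<longleftrightarrow> x \<in> S \<and> y \<in> S"
proof
  assume xy: "x \<in> X \<and> y \<in> X"
  then have "card {x, y} \<le> card X" using assms(1) by (intro card_mono) auto
  then have "X = S" using assms(3,4) by simp
  with xy show "x \<in> S \<and> y \<in> S" by simp
qed (use assms(2) in blast)

lemma ecp_digraph_double_competition:
  assumes fin: "finite V" and bij: "bij_betw v {1..n} V" and ecp: "is_double_indexed_ecp V m n S"
    and I: "\<And>i j. i \<in> {1..n} \<Longrightarrow> j \<in> {1..n} \<Longrightarrow>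
      card (A_set n v S i \<inter> B_set n v S j) \<ge> 2 \<Longrightarrow> A_set n v S i \<inter> B_set n v S j = S i j"
  shows "is_double_competition_multigraph V m (ecp_digraph n v S)"
  unfolding is_double_competition_multigraph_def
proof (intro ballI impI)
  let ?R = "ecp_digraph n v S"
  have inj: "inj_on v {1..n}" and img: "v ` {1..n} = V"
    using bij by (auto simp: bij_betw_def)
  have R: "?R \<subseteq> V \<times> V"
    using img is_double_indexed_ecp_subset[OF ecp] by (intro ecp_digraph_subset) auto
  have between_eq: "between ?R (v i) (v j) = A_set n v S i \<inter> B_set n v S j"
    if "i \<in> {1..n}" "j \<in> {1..n}" for i j
    using that by (simp add: between_def out_nbrs_ecp_digraph[OF inj] in_nbrs_ecp_digraph[OF inj])
  fix x y assume xy: "x \<in> V" "y \<in> V" "x \<noteq> y"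
  have pair_iff: "x \<in> between ?R (v i) (v j) \<and> y \<in> between ?R (v i) (v j) \<longleftrightarrow>
      x \<in> S i j \<and> y \<in> S i j" if ij: "i \<in> {1..n}" "j \<in> {1..n}" for i j
    unfolding between_eq[OF ij]
  proof (rule distinct_pair_mem_iff[OF _ S_subset_A_Int_B[OF ij] I[OF ij] xy(3)])
    have "A_set n v S i \<inter> B_set n v S j \<subseteq> V"
      using R by (auto simp: between_eq[OF ij, symmetric] between_def out_nbrs_def)
    then show "finite (A_set n v S i \<inter> B_set n v S j)"
      using fin by (rule finite_subset)
  qed
  then have "{(i, j). i \<in> {1..n} \<and> j \<in> {1..n} \<and> x \<in> between ?R (v i) (v j) \<and> y \<in> between ?R (v i) (v j)}
      = {(i, j). i \<in> {1..n} \<and> j \<in> {1..n} \<and> x \<in> S i j \<and> y \<in> S i j}"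
    by blast
  then show "m {x, y} = card (out_nbrs ?R x \<inter> out_nbrs ?R y) * card (in_nbrs ?R x \<inter> in_nbrs ?R y)"
    using ecp xy card_common_nbrs_product[OF bij R]
    by (simp add: is_double_indexed_ecp_def)
qed

theorem theorem4:
  fixes V :: "'a set" and m :: "'a set \<Rightarrow> nat" and n :: nat
  assumes "finite V" and "card V = n"
  shows "(\<exists>Arcs. Arcs \<subseteq> V \<times> V \<and> acyclic Arcs \<and> is_double_competition_multigraph V m Arcs)
    \<longleftrightarrow>
    (\<exists>v S. bij_betw v {1..n} V \<and> is_double_indexed_ecp V m n S \<and>
       (\<forall>i\<in>{1..n}. \<forall>j\<in>{1..n}.
          card (A_set n v S i \<inter> B_set n v S j) \<ge> 2 \<longrightarrow> A_set n v S i \<inter> B_set n v S j = S i j) \<and>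
       (\<forall>i\<in>{1..n}. \<forall>j\<in>{1..n}. \<forall>k\<in>{1..n}. v k \<in> S i j \<longrightarrow> i < k \<and> k < j))"
    (is "?digraph \<longleftrightarrow> (\<exists>v S. ?partition v S)")
proof
  assume ?digraph
  then obtain R where R: "R \<subseteq> V \<times> V" "acyclic R" "is_double_competition_multigraph V m R"
    by blast
  obtain v where v: "bij_betw v {1..n} V"
    and v_ord: "\<forall>i\<in>{1..n}. \<forall>k\<in>{1..n}. (v i, v k) \<in> R \<longrightarrow> i < k"
    using acyclic_topological_numbering[OF assms(1) R(1,2)] assms(2) by blast
  define S where "S = (\<lambda>i j. between R (v i) (v j))"
  have "is_double_indexed_ecp V m n S"
    unfolding S_def by (rule double_competition_ecp[OF v R(1,3)])
  moreover have "A_set n v S i \<inter> B_set n v S j = S i j" if "i \<in> {1..n}" "j \<in> {1..n}" for i j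
    unfolding S_def using that by (rule A_Int_B_between)
  moreover have "i < k \<and> k < j" if "i \<in> {1..n}" "j \<in> {1..n}" "k \<in> {1..n}" "v k \<in> S i j" for i j k
    using that v_ord by (auto simp: S_def between_def out_nbrs_def in_nbrs_def)
  ultimately show "\<exists>v S. ?partition v S"
    using v by blast
next
  assume "\<exists>v S. ?partition v S"
  then obtain v S where v: "bij_betw v {1..n} V" and ecp: "is_double_indexed_ecp V m n S"
    and I: "\<forall>i\<in>{1..n}. \<forall>j\<in>{1..n}.
      card (A_set n v S i \<inter> B_set n v S j) \<ge> 2 \<longrightarrow> A_set n v S i \<inter> B_set n v S j = S i j"
    and IV: "\<forall>i\<in>{1..n}. \<forall>j\<in>{1..n}. \<forall>k\<in>{1..n}. v k \<in> S i j \<longrightarrow> i < k \<and> k < j"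
    by blast
  note SV = is_double_indexed_ecp_subset[OF ecp]
  have "ecp_digraph n v S \<subseteq> V \<times> V"
    using v SV by (intro ecp_digraph_subset) (auto simp: bij_betw_def)
  moreover have "acyclic (ecp_digraph n v S)"
    using v SV IV by (intro acyclic_ecp_digraph) (auto simp: bij_betw_def)
  moreover have "is_double_competition_multigraph V m (ecp_digraph n v S)"
    using I by (intro ecp_digraph_double_competition[OF assms(1) v ecp]) blast
  ultimately show ?digraph by blast
qed

end
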